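(* Let $\mathbf A=(A,\wedge,\vee,\cdot,1,\sim,-)$ be a complete perfect DInFL-algebra. Put $I_1=\{i\in J^\infty(\mathbf A)\mid i\leqslant 1\}$ and, for $a,b,c\in J^\infty(\mathbf A)$, define $a\preccurlyeq b$ iff $b\leqslant a$; $c\in a\circ b$ iff $c\leqslant a\cdot b$; $a^\sim={\sim}\kappa(a)$; and $a^-=-\kappa(a)$. Then $a^\sim,a^-\in J^\infty(\mathbf A)$ for all $a\in J^\infty(\mathbf A)$, and $\mathbf A_+=(J^\infty(\mathbf A),I_1,\preccurlyeq,\circ,{}^\sim,{}^-)$ is a DInFL-frame.
   Context: An InFL-algebra is a structure $(A,\wedge,\vee,\cdot,1,\sim,-)$ with $(A,\wedge,\vee)$ a lattice, $(A,\cdot,1)$ a monoid, and for all $a,b,c$: $a\cdot b\leqslant c\iff a\leqslant -(b\cdot{\sim}c)\iff b\leqslant{\sim}(-c\cdot a)$; a DInFL-algebra is one whose lattice reduct is distributive. $J^\infty(\mathbf A)$ and $M^\infty(\mathbf A)$ denote the completely join-irreducible and completely meet-irreducible elements of the lattice. A lattice is complete perfect if it is complete, every element is the join of the completely join-irreducibles below it, and the meet of the completely meet-irreducibles above it. For $j\in J^\infty(\mathbf A)$, $\kappa(j)=\bigvee\{a\in A\mid j\not\leqslant a\}$. For a set $W$ and $\circ:W\times W\to\mathcal P(W)$, $U\circ V=\bigcup\{a\circ b\mid a\in U,b\in V\}$, $x\circ V=\{x\}\circ V$, $U\circ y=U\circ\{y\}$; $x^{\sim-}$ means $(x^\sim)^-$.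 A DInFL-frame is a tuple $(W,I,\preccurlyeq,\circ,{}^\sim,{}^-)$ with $I\subseteq W$, $\preccurlyeq$ a partial order, $\circ:W\times W\to\mathcal P(W)$, ${}^\sim,{}^-:W\to W$, such that for all $u,v,x,y,z$: (F1) $x\preccurlyeq y$ iff $y\in I\circ x$ iff $y\in x\circ I$; (F2) $x\preccurlyeq y$, $x\in I$ imply $y\in I$; (F3) $x\preccurlyeq y$, $x\in u\circ v$ imply $y\in u\circ v$; (F4) $(x\circ y)\circ z=x\circ(y\circ z)$; (F5) $z^\sim\in x\circ y$ iff $y^-\in z\circ x$; (F6) $x^{\sim-}\preccurlyeq x$ and $x^{-\sim}\preccurlyeq x$. *)

theory Defs
  imports Main
begin

text \<open>An InFL-algebra whose lattice reduct is the complete lattice of the carrier type 'a.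
  mult = monoid multiplication, one = unit, nt = the negation written with a tilde,
  nm = the negation written with a minus.\<close>

definition InFL_algebra ::
  "('a::lattice \<Rightarrow> 'a \<Rightarrow> 'a) \<Rightarrow> 'a \<Rightarrow> ('a \<Rightarrow> 'a) \<Rightarrow> ('a \<Rightarrow> 'a) \<Rightarrow> bool" where
  "InFL_algebra mult one nt nm \<longleftrightarrow>
     (\<forall>a b c. mult (mult a b) c = mult a (mult b c)) \<and>
     (\<forall>a. mult one a = a \<and> mult a one = a) \<and>
     (\<forall>a b c. (mult a b \<le> c \<longleftrightarrow> a \<le> nm (mult b (nt c))) \<and>
              (a \<le> nm (mult b (nt c)) \<longleftrightarrow> b \<le> nt (mult (nm c) a)))"

definition DInFL_algebra ::
  "('a::lattice \<Rightarrow> 'a \<Rightarrow> 'a) \<Rightarrow> 'a \<Rightarrow> ('a \<Rightarrow> 'a) \<Rightarrow> ('a \<Rightarrow> 'a) \<Rightarrow> bool" where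
  "DInFL_algebra mult one nt nm \<longleftrightarrow>
     InFL_algebra mult one nt nm \<and>
     (\<forall>x y z::'a. inf x (sup y z) = sup (inf x y) (inf x z))"

definition Jinf :: "'a::complete_lattice set" where
  "Jinf = {j. \<forall>S. j = Sup S \<longrightarrow> j \<in> S}"

definition Minf :: "'a::complete_lattice set" where
  "Minf = {m. \<forall>S. m = Inf S \<longrightarrow> m \<in> S}"

text \<open>Perfectness (completeness is given by the type class).\<close>

definition perfect_lattice :: "'a::complete_lattice itself \<Rightarrow> bool" where
  "perfect_lattice _ \<longleftrightarrow>
     (\<forall>a::'a. a = Sup {j \<in> Jinf. j \<le> a} \<and> a = Inf {m \<in> Minf. a \<le> m})"

definition kappa :: "'a::complete_lattice \<Rightarrow> 'a" where
  "kappa j = Sup {a. \<not> j \<le> a}"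

definition setcirc :: "('w \<Rightarrow> 'w \<Rightarrow> 'w set) \<Rightarrow> 'w set \<Rightarrow> 'w set \<Rightarrow> 'w set" where
  "setcirc circ U V = (\<Union>a\<in>U. \<Union>b\<in>V. circ a b)"

definition DInFL_frame ::
  "'w set \<Rightarrow> 'w set \<Rightarrow> ('w \<Rightarrow> 'w \<Rightarrow> bool) \<Rightarrow> ('w \<Rightarrow> 'w \<Rightarrow> 'w set)
     \<Rightarrow> ('w \<Rightarrow> 'w) \<Rightarrow> ('w \<Rightarrow> 'w) \<Rightarrow> bool" where
  "DInFL_frame W I pr circ nt nm \<longleftrightarrow>
     I \<subseteq> W \<and>
     (\<forall>x\<in>W. \<forall>y\<in>W. circ x y \<subseteq> W) \<and>
     (\<forall>x\<in>W. nt x \<in> W \<and> nm x \<in> W) \<and>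
     (\<forall>x\<in>W. pr x x) \<and>
     (\<forall>x\<in>W. \<forall>y\<in>W. pr x y \<and> pr y x \<longrightarrow> x = y) \<and>
     (\<forall>x\<in>W. \<forall>y\<in>W. \<forall>z\<in>W. pr x y \<and> pr y z \<longrightarrow> pr x z) \<and>
     \<comment> \<open>F1\<close>
     (\<forall>x\<in>W. \<forall>y\<in>W. (pr x y \<longleftrightarrow> y \<in> setcirc circ I {x}) \<and>
                     (y \<in> setcirc circ I {x} \<longleftrightarrow> y \<in> setcirc circ {x} I)) \<and>
     \<comment> \<open>F2\<close>
     (\<forall>x\<in>W. \<forall>y\<in>W. pr x y \<and> x \<in> I \<longrightarrow> y \<in> I) \<and>
     \<comment> \<open>F3\<close>
     (\<forall>x\<in>W. \<forall>y\<in>W. \<forall>u\<in>W. \<forall>v\<in>W. pr x y \<and> x \<in> circ u v \<longrightarrow> y \<in> circ u v) \<and>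
     \<comment> \<open>F4\<close>
     (\<forall>x\<in>W. \<forall>y\<in>W. \<forall>z\<in>W.
        setcirc circ (circ x y) {z} = setcirc circ {x} (circ y z)) \<and>
     \<comment> \<open>F5\<close>
     (\<forall>x\<in>W. \<forall>y\<in>W. \<forall>z\<in>W. nt z \<in> circ x y \<longleftrightarrow> nm y \<in> circ z x) \<and>
     \<comment> \<open>F6\<close>
     (\<forall>x\<in>W. pr (nm (nt x)) x \<and> pr (nt (nm x)) x)"

end

theory Submission
  imports Defs
begin

text \<open>In a distributive lattice in which every element is a meet of completely meet-irreducibles,
  every completely join-irreducible \<open>j\<close> is completely join-prime, and \<open>\<kappa>(j)\<close> is the largest
  element not above \<open>j\<close>. The two negations are mutually inverse order-reversing maps, related
  to multiplication by residuation; consequently \<open>\<sim>\<kappa>(j)\<close> is again completely join-irreducible,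
  with \<open>\<sim>\<kappa>(j) \<le> a\<close> iff \<open>j \<le> -a\<close> fails. Residuated multiplication preserves joins in each
  argument, so by join-primeness every join-irreducible below \<open>a\<cdot>b\<close> lies below \<open>a'\<cdot>b'\<close> for
  join-irreducibles \<open>a' \<le> a\<close>, \<open>b' \<le> b\<close>; this turns the unit, associativity and residuation
  laws of the algebra into the frame conditions. Every fact about \<open>-\<close> is the corresponding
  fact about \<open>\<sim>\<close> in the opposite algebra \<open>a \<cdot>' b = b \<cdot> a\<close>, whose negations are swapped.\<close>

lemma Jinf_Sup_less: "(j::'a::complete_lattice) \<in> Jinf \<Longrightarrow> Sup {x. x < j} < j"
proof -
  assume "j \<in> Jinf"
  then have "j = Sup {x. x < j} \<longrightarrow> j \<in> {x. x < j}" unfolding Jinf_def by blast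
  moreover have "Sup {x. x < j} \<le> j" by (rule Sup_least) simp
  ultimately show ?thesis by (auto simp: order.strict_iff_order)
qed

lemma Minf_less_Inf: "(m::'a::complete_lattice) \<in> Minf \<Longrightarrow> m < Inf {x. m < x}"
proof -
  assume "m \<in> Minf"
  then have "m = Inf {x. m < x} \<longrightarrow> m \<in> {x. m < x}" unfolding Minf_def by blast
  moreover have "m \<le> Inf {x. m < x}" by (rule Inf_greatest) simp
  ultimately show ?thesis by (auto simp: order.strict_iff_order)
qed

context
  assumes distrib: "\<And>x y z::'a::complete_lattice. inf x (sup y z) = sup (inf x y) (inf x z)"
    and meet_dense: "\<And>a::'a. a = Inf {m \<in> Minf. a \<le> m}"
begin

lemma not_le_kappa:
  fixes j :: 'a
  assumes j: "j \<in> Jinf"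
  shows "\<not> j \<le> kappa j"
proof -
  define j' where "j' = Sup {x. x < j}"
  have below_j': "x < j \<Longrightarrow> x \<le> j'" for x
    unfolding j'_def by (simp add: Sup_upper)
  \<comment> \<open>since \<open>j' < j\<close>, meet-density separates \<open>j\<close> from \<open>j'\<close> by a meet-irreducible \<open>m\<close>\<close>
  obtain m where m: "m \<in> Minf" "j' \<le> m" "\<not> j \<le> m"
  proof -
    have "j' < j" using Jinf_Sup_less[OF j] unfolding j'_def .
    then have "\<not> j \<le> Inf {m \<in> Minf. j' \<le> m}"
      by (simp add: meet_dense[of j', symmetric] not_le)
    then show thesis using that Inf_greatest[of "{m \<in> Minf. j' \<le> m}" j] by blast
  qed
  define m' where "m' = Inf {x. m < x}"
  have m'_below: "m < x \<Longrightarrow> m' \<le> x" for x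
    unfolding m'_def by (simp add: Inf_lower)
  \<comment> \<open>\<open>m'\<close> is the least element strictly above \<open>m\<close>; an \<open>s\<close> above neither \<open>m\<close>
    nor \<open>j\<close> would let distributivity push \<open>m'\<close> below \<open>m\<close>\<close>
  have non_upper_le_m: "s \<le> m" if s: "\<not> j \<le> s" for s
  proof (rule ccontr)
    assume "\<not> s \<le> m"
    then have "m' \<le> sup s m" and "m' \<le> sup j m"
      using m(3) by (auto intro!: m'_below simp: less_le_not_le)
    have "inf j s < j" using s by (simp add: less_le_not_le)
    then have "inf j s \<le> m" using order.trans[OF below_j' m(2)] by blast
    then have "inf j (sup s m) \<le> m" by (simp add: distrib)
    have "m' = inf m' (sup j m)" using \<open>m' \<le> sup j m\<close> by (rule inf.absorb1[symmetric])
    also have "\<dots> = sup (inf m' j) (inf m' m)" by (rule distrib)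
    also have "\<dots> \<le> m"
    proof (rule sup_least)
      have "inf m' j \<le> inf j (sup s m)"
        using \<open>m' \<le> sup s m\<close> by (simp add: le_infI1)
      then show "inf m' j \<le> m" using \<open>inf j (sup s m) \<le> m\<close> by (rule order.trans)
    qed simp
    finally show False using Minf_less_Inf[OF m(1)] unfolding m'_def by simp
  qed
  then have "kappa j \<le> m" unfolding kappa_def by (blast intro: Sup_least)
  with m(3) show ?thesis using order.trans[of j "kappa j" m] by blast
qed

lemma le_iff_not_le_kappa: "(j::'a) \<in> Jinf \<Longrightarrow> j \<le> a \<longleftrightarrow> \<not> a \<le> kappa j"
proof -
  assume "j \<in> Jinf"
  have "\<not> j \<le> a \<Longrightarrow> a \<le> kappa j" unfolding kappa_def by (simp add: Sup_upper)
  moreover have "j \<le> a \<Longrightarrow> a \<le> kappa j \<Longrightarrow> False"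
    using not_le_kappa[OF \<open>j \<in> Jinf\<close>] order.trans[of j a "kappa j"] by blast
  ultimately show ?thesis by blast
qed

lemma Jinf_le_SupD: "(j::'a) \<in> Jinf \<Longrightarrow> j \<le> Sup S \<Longrightarrow> \<exists>s\<in>S. j \<le> s"
proof (rule ccontr)
  assume j: "j \<in> Jinf" and "j \<le> Sup S" and "\<not> (\<exists>s\<in>S. j \<le> s)"
  then have "Sup S \<le> kappa j" using le_iff_not_le_kappa[OF j] by (blast intro: Sup_least)
  with \<open>j \<le> Sup S\<close> show False using le_iff_not_le_kappa[OF j] by blast
qed

end

locale infl =
  fixes mult :: "'a::lattice \<Rightarrow> 'a \<Rightarrow> 'a"
    and one :: 'a and nt nm :: "'a \<Rightarrow> 'a"
  assumes InFL: "InFL_algebra mult one nt nm"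
begin

lemma mult_assoc: "mult (mult a b) c = mult a (mult b c)"
  and one_mult: "mult one a = a"
  and mult_one: "mult a one = a"
  and residuation_left: "mult a b \<le> c \<longleftrightarrow> a \<le> nm (mult b (nt c))"
  and residuation_right: "mult a b \<le> c \<longleftrightarrow> b \<le> nt (mult (nm c) a)"
  using InFL unfolding InFL_algebra_def by blast+

lemma nm_nt: "nm (nt c) = c"
  using residuation_left[of _ one c] by (metis mult_one one_mult order.refl order.antisym)

lemma nt_nm: "nt (nm c) = c"
  using residuation_right[of one _ c] by (metis mult_one one_mult order.refl order.antisym)

lemma mult_mono_left: "a \<le> a' \<Longrightarrow> mult a b \<le> mult a' b"
  by (metis residuation_left order.refl order.trans)

lemma mult_mono_right: "b \<le> b' \<Longrightarrow> mult a b \<le> mult a b'"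
  by (metis residuation_right order.refl order.trans)

lemma nt_antimono: "x \<le> y \<Longrightarrow> nt y \<le> nt x"
proof -
  assume "x \<le> y"
  have key: "mult a b \<le> nt one \<longleftrightarrow> b \<le> nt a" for a b
    using residuation_right[of a b "nt one"] by (simp add: nm_nt one_mult)
  have "mult x (nt y) \<le> mult y (nt y)" using \<open>x \<le> y\<close> by (rule mult_mono_left)
  also have "\<dots> \<le> nt one" by (rule key[THEN iffD2, OF order.refl])
  finally show ?thesis by (rule key[THEN iffD1])
qed

lemma nm_antimono: "x \<le> y \<Longrightarrow> nm y \<le> nm x"
proof -
  assume "x \<le> y"
  have key: "mult a b \<le> nm one \<longleftrightarrow> a \<le> nm b" for a b
    using residuation_left[of a b "nm one"] by (simp add: nt_nm mult_one)
  have "mult (nm y) x \<le> mult (nm y) y" using \<open>x \<le> y\<close> by (rule mult_mono_right)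
  also have "\<dots> \<le> nm one" by (rule key[THEN iffD2, OF order.refl])
  finally show ?thesis by (rule key[THEN iffD1])
qed

lemma nt_le_nt_iff: "nt x \<le> nt y \<longleftrightarrow> y \<le> x"
  using nm_antimono[of "nt x" "nt y"] nt_antimono[of y x] by (auto simp: nm_nt)

lemma nt_le_iff_nm_le: "nt a \<le> b \<longleftrightarrow> nm b \<le> a"
  using nm_antimono[of "nt a" b] nt_antimono[of "nm b" a] by (auto simp: nm_nt nt_nm)

lemma le_nt_iff_le_nm: "a \<le> nt b \<longleftrightarrow> b \<le> nm a"
  using nm_antimono[of a "nt b"] nt_antimono[of b "nm a"] by (auto simp: nm_nt nt_nm)

lemma le_nm_mult_iff_le_nt_mult: "z \<le> nm (mult x y) \<longleftrightarrow> y \<le> nt (mult z x)"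
  using residuation_left[of z x "nm y"] le_nt_iff_le_nm by (simp add: nt_nm)


lemma InFL_algebra_opposite: "InFL_algebra (\<lambda>a b. mult b a) one nm nt"
proof -
  have "mult b a \<le> c \<longleftrightarrow> a \<le> nt (mult (nm c) b)"
    and "a \<le> nt (mult (nm c) b) \<longleftrightarrow> b \<le> nm (mult a (nt c))" for a b c
    using residuation_left[of b a c] residuation_right[of b a c] by blast+
  then show ?thesis unfolding InFL_algebra_def by (simp add: mult_assoc one_mult mult_one)
qed
end

locale complete_perfect_dinfl = infl mult one nt nm
  for mult :: "'a::complete_lattice \<Rightarrow> 'a \<Rightarrow> 'a" and one nt nm +
  assumes distrib: "inf x (sup y z) = sup (inf x y) (inf x (z::'a))"
    and perfect: "perfect_lattice TYPE('a)"
begin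

lemma opposite: "complete_perfect_dinfl (\<lambda>a b. mult b a) one nm nt"
  by (intro complete_perfect_dinfl.intro infl.intro complete_perfect_dinfl_axioms.intro
      InFL_algebra_opposite distrib perfect)

lemma join_dense: "(a::'a) = Sup {j \<in> Jinf. j \<le> a}"
  by (rule perfect[unfolded perfect_lattice_def, THEN spec, THEN conjunct1])

lemma meet_dense: "(a::'a) = Inf {m \<in> Minf. a \<le> m}"
  by (rule perfect[unfolded perfect_lattice_def, THEN spec, THEN conjunct2])

lemmas not_le_kappa = not_le_kappa[OF distrib meet_dense]
lemmas le_iff_not_le_kappa = le_iff_not_le_kappa[OF distrib meet_dense]
lemmas Jinf_le_SupD = Jinf_le_SupD[OF distrib meet_dense]

lemma nt_kappa_le_iff:
  assumes "j \<in> Jinf" shows "nt (kappa j) \<le> a \<longleftrightarrow> \<not> j \<le> nm a"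
proof -
  have "nt (kappa j) \<le> a \<longleftrightarrow> nm a \<le> kappa j" by (rule nt_le_iff_nm_le)
  also have "\<dots> \<longleftrightarrow> \<not> j \<le> nm a" using le_iff_not_le_kappa[OF assms, of "nm a"] by blast
  finally show ?thesis .
qed

lemma nt_kappa_Jinf:
  assumes j: "j \<in> Jinf" shows "nt (kappa j) \<in> Jinf"
  unfolding Jinf_def
proof (intro CollectI allI impI)
  fix S assume S: "nt (kappa j) = Sup S"
  show "nt (kappa j) \<in> S"
  proof (rule ccontr)
    assume notin: "nt (kappa j) \<notin> S"
    \<comment> \<open>each \<open>s \<in> S\<close> is strictly below \<open>\<sim>\<kappa>(j)\<close>, so \<open>-s\<close> is strictly above \<open>\<kappa>(j)\<close>, hence above \<open>j\<close>\<close>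
    have "s \<le> nt j" if "s \<in> S" for s
    proof -
      have "s \<le> nt (kappa j)" unfolding S using that by (rule Sup_upper)
      then have "kappa j \<le> nm s" using le_nt_iff_le_nm by blast
      moreover have "nm s \<noteq> kappa j"
        using that notin nt_nm[of s] by auto
      ultimately have "\<not> nm s \<le> kappa j" using order.antisym[of "nm s" "kappa j"] by blast
      then have "j \<le> nm s" using le_iff_not_le_kappa[OF j, of "nm s"] by blast
      then show ?thesis using le_nt_iff_le_nm by blast
    qed
    then have "nt (kappa j) \<le> nt j" unfolding S by (rule Sup_least)
    then show False using not_le_kappa[OF j] nt_le_nt_iff[of "kappa j" j] by blast
  qed
qed

lemma mult_Sup_left_le: "mult (Sup S) b \<le> Sup ((\<lambda>a. mult a b) ` S)"
proof -
  have "Sup S \<le> nm (mult b (nt (Sup ((\<lambda>a. mult a b) ` S))))"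
    by (rule Sup_least) (metis residuation_left image_eqI Sup_upper)
  then show ?thesis using residuation_left by blast
qed

lemma Jinf_le_mult_left:
  assumes "c \<in> Jinf"
  shows "c \<le> mult w b \<longleftrightarrow> (\<exists>a\<in>Jinf. a \<le> w \<and> c \<le> mult a b)"
proof
  assume "c \<le> mult w b"
  also have "mult w b \<le> Sup ((\<lambda>a. mult a b) ` {j \<in> Jinf. j \<le> w})"
    using mult_Sup_left_le[of "{j \<in> Jinf. j \<le> w}" b] by (simp only: join_dense[symmetric])
  finally show "\<exists>a\<in>Jinf. a \<le> w \<and> c \<le> mult a b"
    using Jinf_le_SupD[OF assms] by blast
next
  assume "\<exists>a\<in>Jinf. a \<le> w \<and> c \<le> mult a b"
  then obtain a where "a \<le> w" "c \<le> mult a b" by blast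
  from \<open>c \<le> mult a b\<close> mult_mono_left[OF \<open>a \<le> w\<close>] show "c \<le> mult w b" by (rule order.trans)
qed

lemma setcirc_downset_left:
  "setcirc (\<lambda>a b. {c \<in> Jinf. c \<le> mult a b}) {c \<in> Jinf. c \<le> w} {z}
     = {c \<in> Jinf. c \<le> mult w z}"
  unfolding setcirc_def by (auto simp: Jinf_le_mult_left[of _ w z])

lemma Jinf_le_nm_kappa_nt_kappa: "x \<in> Jinf \<Longrightarrow> x \<le> nm (kappa (nt (kappa x)))"
proof -
  assume x: "x \<in> Jinf"
  have "\<not> nt (kappa x) \<le> kappa (nt (kappa x))"
    by (rule not_le_kappa[OF nt_kappa_Jinf[OF x]])
  then have "\<not> nm (kappa (nt (kappa x))) \<le> kappa x" using nt_le_iff_nm_le by blast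
  then show ?thesis using le_iff_not_le_kappa[OF x] by blast
qed

end

lemma setcirc_swap: "setcirc (\<lambda>a b. f b a) U V = setcirc f V U"
  unfolding setcirc_def by blast

context complete_perfect_dinfl
begin

interpretation op: complete_perfect_dinfl "\<lambda>a b. mult b a" one nm nt
  by (rule opposite)

lemma nm_kappa_Jinf: "j \<in> Jinf \<Longrightarrow> nm (kappa j) \<in> Jinf"
  by (rule op.nt_kappa_Jinf)

lemma nm_kappa_le_iff: "j \<in> Jinf \<Longrightarrow> nm (kappa j) \<le> a \<longleftrightarrow> \<not> j \<le> nt a"
  by (rule op.nt_kappa_le_iff)

lemma setcirc_downset_right:
  "setcirc (\<lambda>a b. {c \<in> Jinf. c \<le> mult a b}) {z} {c \<in> Jinf. c \<le> w}
     = {c \<in> Jinf. c \<le> mult z w}"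
proof -
  have "setcirc (\<lambda>a b. {c \<in> Jinf. c \<le> mult a b}) {z} {c \<in> Jinf. c \<le> w}
      = setcirc (\<lambda>a b. {c \<in> Jinf. c \<le> mult b a}) {c \<in> Jinf. c \<le> w} {z}"
    by (rule setcirc_swap[symmetric])
  also have "\<dots> = {c \<in> Jinf. c \<le> mult z w}" by (rule op.setcirc_downset_left)
  finally show ?thesis .
qed

lemma Jinf_le_nt_kappa_nm_kappa: "x \<in> Jinf \<Longrightarrow> x \<le> nt (kappa (nm (kappa x)))"
  by (rule op.Jinf_le_nm_kappa_nt_kappa)

lemma nt_kappa_le_mult_iff:
  assumes "y \<in> Jinf" and "z \<in> Jinf"
  shows "nt (kappa z) \<le> mult x y \<longleftrightarrow> nm (kappa y) \<le> mult z x"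
proof -
  have "nt (kappa z) \<le> mult x y \<longleftrightarrow> \<not> z \<le> nm (mult x y)"
    by (rule nt_kappa_le_iff[OF \<open>z \<in> Jinf\<close>])
  also have "\<dots> \<longleftrightarrow> \<not> y \<le> nt (mult z x)"
    by (simp only: le_nm_mult_iff_le_nt_mult)
  also have "\<dots> \<longleftrightarrow> nm (kappa y) \<le> mult z x"
    by (simp only: nm_kappa_le_iff[OF \<open>y \<in> Jinf\<close>])
  finally show ?thesis .
qed

lemma DInFL_frame_Jinf:
  "DInFL_frame Jinf {i \<in> Jinf. i \<le> one} (\<lambda>a b. b \<le> a)
     (\<lambda>a b. {c \<in> Jinf. c \<le> mult a b}) (\<lambda>a. nt (kappa a)) (\<lambda>a. nm (kappa a))"
proof -
  have circ_unit: "setcirc (\<lambda>a b. {c \<in> Jinf. c \<le> mult a b}) {i \<in> Jinf. i \<le> one} {x}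
              = {y \<in> Jinf. y \<le> x}"
       "setcirc (\<lambda>a b. {c \<in> Jinf. c \<le> mult a b}) {x} {i \<in> Jinf. i \<le> one}
              = {y \<in> Jinf. y \<le> x}" for x
    by (simp_all only: setcirc_downset_left setcirc_downset_right one_mult mult_one)
  have circ_assoc: "setcirc (\<lambda>a b. {c \<in> Jinf. c \<le> mult a b}) {c \<in> Jinf. c \<le> mult x y} {z} =
            setcirc (\<lambda>a b. {c \<in> Jinf. c \<le> mult a b}) {x} {c \<in> Jinf. c \<le> mult y z}" for x y z
    by (simp only: setcirc_downset_left setcirc_downset_right mult_assoc)
  show ?thesis
    unfolding DInFL_frame_def
    by (auto simp: circ_unit circ_assoc nt_kappa_le_mult_iff nt_kappa_Jinf nm_kappa_Jinf
        Jinf_le_nm_kappa_nt_kappa Jinf_le_nt_kappa_nm_kappa)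
qed

end

theorem mainTheorem5:
  fixes mult :: "'a::complete_lattice \<Rightarrow> 'a \<Rightarrow> 'a"
    and one :: 'a and nt nm :: "'a \<Rightarrow> 'a"
  assumes "DInFL_algebra mult one nt nm"
    and "perfect_lattice TYPE('a)"
  shows "(\<forall>a\<in>Jinf. nt (kappa a) \<in> Jinf \<and> nm (kappa a) \<in> Jinf) \<and>
         DInFL_frame Jinf {i \<in> Jinf. i \<le> one} (\<lambda>a b. b \<le> a)
           (\<lambda>a b. {c \<in> Jinf. c \<le> mult a b}) (\<lambda>a. nt (kappa a)) (\<lambda>a. nm (kappa a))"
proof -
  interpret complete_perfect_dinfl mult one nt nm
    using assms unfolding DInFL_algebra_def by unfold_locales auto
  show ?thesis using nt_kappa_Jinf nm_kappa_Jinf DInFL_frame_Jinf by blast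
qed

end
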